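(* Let $A$ be a T-brace. Then the additive group of $\zeta_n(\star,A)/\zeta(\star,A)$ is periodic for all natural numbers $n$.
   Context: A (left) brace is a set $A$ with two operations $+$ and $\cdot$ such that $(A,+)$ is an abelian group, $(A,\cdot)$ is a group, and $a(b+c)=ab+ac-a$ for all $a,b,c\in A$. Put $a\star b=ab-a-b$. A subbrace is a subset which is a subgroup of both $(A,+)$ and $(A,\cdot)$; a subbrace $L$ is an ideal if $a\star z, z\star a\in L$ for all $a\in A$, $z\in L$, and then the quotient brace $A/L$ is defined. $A$ is a T-brace if whenever $I$ is an ideal of $J$ and $J$ is an ideal of $A$, then $I$ is an ideal of $A$. The $\star$-center is $\zeta(\star,A)=\{a: a\star x=x\star a=0\ \forall x\}$; the upper $\star$-central series is $\zeta_0(\star,A)=0$, $\zeta_{n+1}(\star,A)/\zeta_n(\star,A)=\zeta(\star,A/\zeta_n(\star,A))$, each term an ideal of $A$. *)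

theory Defs
  imports Main
begin

text \<open>A (left) brace whose underlying set is the whole type 'a: the addition is the
  abelian group structure of the type class ab_group_add, the multiplication is m.\<close>

definition mgroup :: "('a \<Rightarrow> 'a \<Rightarrow> 'a) \<Rightarrow> bool" where
  "mgroup m \<longleftrightarrow> (\<forall>a b c. m (m a b) c = m a (m b c)) \<and>
     (\<exists>e. (\<forall>a. m e a = a \<and> m a e = a) \<and> (\<forall>a. \<exists>b. m a b = e \<and> m b a = e))"

definition mone :: "('a \<Rightarrow> 'a \<Rightarrow> 'a) \<Rightarrow> 'a" where
  "mone m = (THE e. \<forall>a. m e a = a \<and> m a e = a)"

definition minv :: "('a \<Rightarrow> 'a \<Rightarrow> 'a) \<Rightarrow> 'a \<Rightarrow> 'a" where
  "minv m a = (THE b. m a b = mone m \<and> m b a = mone m)"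

definition brace :: "('a::ab_group_add \<Rightarrow> 'a \<Rightarrow> 'a) \<Rightarrow> bool" where
  "brace m \<longleftrightarrow> mgroup m \<and> (\<forall>a b c. m a (b + c) = m a b + m a c - a)"

definition star :: "('a::ab_group_add \<Rightarrow> 'a \<Rightarrow> 'a) \<Rightarrow> 'a \<Rightarrow> 'a \<Rightarrow> 'a" where
  "star m a b = m a b - a - b"

definition subbrace :: "('a::ab_group_add \<Rightarrow> 'a \<Rightarrow> 'a) \<Rightarrow> 'a set \<Rightarrow> bool" where
  "subbrace m L \<longleftrightarrow>
     0 \<in> L \<and> (\<forall>a\<in>L. \<forall>b\<in>L. a + b \<in> L) \<and> (\<forall>a\<in>L. - a \<in> L) \<and>
     mone m \<in> L \<and> (\<forall>a\<in>L. \<forall>b\<in>L. m a b \<in> L) \<and> (\<forall>a\<in>L. minv m a \<in> L)"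

text \<open>L is an ideal of the subbrace J (J = UNIV: ideal of A).\<close>
definition ideal_of :: "('a::ab_group_add \<Rightarrow> 'a \<Rightarrow> 'a) \<Rightarrow> 'a set \<Rightarrow> 'a set \<Rightarrow> bool" where
  "ideal_of m L J \<longleftrightarrow> subbrace m J \<and> subbrace m L \<and> L \<subseteq> J \<and>
     (\<forall>a\<in>J. \<forall>z\<in>L. star m a z \<in> L \<and> star m z a \<in> L)"

definition tbrace :: "('a::ab_group_add \<Rightarrow> 'a \<Rightarrow> 'a) \<Rightarrow> bool" where
  "tbrace m \<longleftrightarrow> (\<forall>I J. ideal_of m I J \<and> ideal_of m J UNIV \<longrightarrow> ideal_of m I UNIV)"

text \<open>Upper star-central series, with the quotient unfolded: in A/L one has
  (a+L) star (x+L) = (a star x) + L, so zeta_(n+1) is the preimage of the star-center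
  of A/zeta_n.\<close>
fun zeta :: "('a::ab_group_add \<Rightarrow> 'a \<Rightarrow> 'a) \<Rightarrow> nat \<Rightarrow> 'a set" where
  "zeta m 0 = {0}"
| "zeta m (Suc n) = {a. \<forall>x. star m a x \<in> zeta m n \<and> star m x a \<in> zeta m n}"

end

theory Submission
  imports Defs "HOL.Modules"
begin

text \<open>Let \<open>L\<close> be an ideal, let \<open>Z\<^sub>1\<close> and \<open>Z\<^sub>2\<close> be the next two terms of the
  \<open>\<star>\<close>-central series over \<open>L\<close>, and suppose \<open>a \<in> Z\<^sub>2\<close> has no non-zero multiple in \<open>Z\<^sub>1\<close>. Put
  \<open>b = 2a\<close> and \<open>d = b \<star> b\<close>. Then \<open>J = \<langle>b\<rangle> + Z\<^sub>1\<close> is an ideal of \<open>A\<close>, since it lies between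
  \<open>Z\<^sub>1\<close> and \<open>Z\<^sub>2\<close>, and \<open>I = \<langle>b, d\<rangle> + L\<close> is an ideal of \<open>J\<close>, since \<open>t \<star> b \<equiv> n d\<close> modulo \<open>L\<close>
  whenever \<open>t \<equiv> n b\<close> modulo \<open>Z\<^sub>1\<close>. In a T-brace \<open>I\<close> is therefore an ideal of \<open>A\<close>, so
  \<open>e = a \<star> b\<close> lies in \<open>I \<inter> Z\<^sub>1 = \<langle>d\<rangle> + L\<close>, say \<open>e \<equiv> l d\<close>. As \<open>d \<equiv> 2e\<close>, the odd number
  \<open>1 - 2l\<close> kills \<open>d\<close>, hence all of \<open>I \<inter> Z\<^sub>1\<close>, which contains every \<open>x \<star> b\<close> and \<open>b \<star> x\<close>;
  so \<open>(1 - 2l) b \<in> Z\<^sub>1\<close>, a contradiction.\<close>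

definition zsmul :: "int \<Rightarrow> 'a::ab_group_add \<Rightarrow> 'a" where
  "zsmul i x = (\<Sum>_<nat i. x) - (\<Sum>_<nat (- i). x)"

lemma sum_const_lessThan_add:
  "(\<Sum>_<k + l. x) = (\<Sum>_<k. x) + (\<Sum>_<l. x)" for k l :: nat and x :: "'a::ab_group_add"
  by (induction k) (simp_all add: algebra_simps)

lemma sum_const_lessThan_mult:
  "(\<Sum>_<k * l. x) = (\<Sum>_<k. \<Sum>_<l. x)" for k l :: nat and x :: "'a::ab_group_add"
  by (induction k) (simp_all add: sum_const_lessThan_add)

lemma zsmul_of_nat_diff: "zsmul (int p - int q) x = (\<Sum>_<p. x) - (\<Sum>_<q. x)"
proof -
  have "p + nat (int q - int p) = nat (int p - int q) + q" by linarith
  then have "(\<Sum>_<p. x) + (\<Sum>_<nat (int q - int p). x) = (\<Sum>_<nat (int p - int q). x) + (\<Sum>_<q. x)"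
    by (metis sum_const_lessThan_add)
  then show ?thesis unfolding zsmul_def by (simp add: algebra_simps)
qed

lemma zsmul_of_nat: "zsmul (int k) x = (\<Sum>_<k. x)"
  using zsmul_of_nat_diff[of k 0] by simp

text \<open>Every abelian group is a \<open>\<int>\<close>-module; its subspaces are the additive subgroups and
  \<open>int_module.span X\<close> is the subgroup generated by \<open>X\<close>.\<close>

interpretation int_module: module "zsmul :: int \<Rightarrow> 'a::ab_group_add \<Rightarrow> 'a"
proof
  fix i j :: int and x y :: 'a
  obtain p q where i: "i = int p - int q" by (rule int_diff_cases)
  obtain p' q' where j: "j = int p' - int q'" by (rule int_diff_cases)
  show "zsmul i (x + y) = zsmul i x + zsmul i y"
    unfolding zsmul_def by (simp add: sum.distrib algebra_simps)
  have "i + j = int (p + p') - int (q + q')" using i j by simp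
  then show "zsmul (i + j) x = zsmul i x + zsmul j x"
    by (simp only: zsmul_of_nat_diff) (simp add: i j zsmul_of_nat_diff sum_const_lessThan_add)
  have "i * j = int (p * p' + q * q') - int (p * q' + q * p')" unfolding i j by (simp add: algebra_simps)
  then show "zsmul i (zsmul j x) = zsmul (i * j) x"
    by (simp only: zsmul_of_nat_diff)
      (simp add: i j zsmul_of_nat_diff sum_const_lessThan_add sum_const_lessThan_mult sum_subtractf)
  show "zsmul 1 x = x" unfolding zsmul_def by simp
qed

lemma int_module_subspaceI:
  assumes "0 \<in> S" and "\<And>x y. x \<in> S \<Longrightarrow> y \<in> S \<Longrightarrow> x + y \<in> S" and "\<And>x. x \<in> S \<Longrightarrow> - x \<in> S"
  shows "int_module.subspace S"
proof (rule int_module.subspaceI[OF assms(1,2)])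
  fix i and x :: 'a assume x: "x \<in> S"
  show "zsmul i x \<in> S"
  proof (induction i rule: int_induct[where k = 0])
    case base show ?case using assms(1) by simp
  next
    case (step1 i)
    then show ?case using assms(2)[OF _ x] by (simp add: int_module.scale_left_distrib)
  next
    case (step2 i)
    then have "zsmul i x + - x \<in> S" using assms(2,3) x by blast
    then show ?case by (simp add: int_module.scale_left_diff_distrib)
  qed
qed

lemma additive_zsmul:
  assumes "additive f"
  shows "f (zsmul i x) = zsmul i (f x)"
proof -
  obtain p q where "i = int p - int q" by (rule int_diff_cases)
  then show ?thesis by (simp add: zsmul_of_nat_diff additive.diff[OF assms] additive.sum[OF assms])
qed

lemma additive_zsmul_right: "additive (zsmul i)"
  by unfold_locales (rule int_module.scale_right_distrib)

lemma additive_module_hom: "additive f \<Longrightarrow> module_hom zsmul zsmul f"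
  by (simp add: module_hom_def module_hom_axioms_def additive.add additive_zsmul
      int_module.module_axioms)

lemma additive_image_span_subset:
  assumes "additive f" and "int_module.subspace I" and "f ` X \<subseteq> I"
  shows "f ` int_module.span X \<subseteq> I"
proof -
  interpret module_hom zsmul zsmul f using assms(1) by (rule additive_module_hom)
  have "int_module.span (f ` X) \<subseteq> I" using assms(2,3) by (rule int_module.span_minimal[rotated])
  then show ?thesis by (simp add: span_image)
qed

lemma quasi_additive_zsmul:
  assumes L: "int_module.subspace L" and S: "int_module.subspace S"
    and g: "\<And>u v. u \<in> S \<Longrightarrow> v \<in> S \<Longrightarrow> g (u + v) - (g u + g v) \<in> L"
    and u: "u \<in> S"
  shows "g (zsmul i u) - zsmul i (g u) \<in> L"
proof (induction i rule: int_induct[where k = 0])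
  case base
  have "g (0 + 0) - (g 0 + g 0) \<in> L" using g int_module.subspace_0[OF S] by blast
  then show ?case using int_module.subspace_neg[OF L] by fastforce
next
  case (step1 i)
  have "g (zsmul i u + u) - (g (zsmul i u) + g u) \<in> L"
    using g int_module.subspace_scale[OF S u] u by blast
  from int_module.subspace_add[OF L this step1.IH] show ?case
    by (simp add: int_module.scale_left_distrib algebra_simps)
next
  case (step2 i)
  have "g (zsmul (i - 1) u + u) - (g (zsmul (i - 1) u) + g u) \<in> L"
    using g int_module.subspace_scale[OF S u] u by blast
  from int_module.subspace_diff[OF L step2.IH this] show ?case
    by (simp add: int_module.scale_left_diff_distrib algebra_simps)
qed

lemma zsmul_abs_mem: "int_module.subspace S \<Longrightarrow> zsmul i x \<in> S \<Longrightarrow> zsmul \<bar>i\<bar> x \<in> S"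
  by (cases "0 \<le> i") (simp_all add: int_module.subspace_neg)

lemma span_insert_Int_subset:
  assumes Z: "int_module.subspace Z" and "int_module.span S \<subseteq> Z"
    and no_multiple: "\<And>i. i \<noteq> 0 \<Longrightarrow> zsmul i b \<notin> Z"
  shows "int_module.span (insert b S) \<inter> Z \<subseteq> int_module.span S"
proof
  fix s assume "s \<in> int_module.span (insert b S) \<inter> Z"
  then obtain i where i: "s - zsmul i b \<in> int_module.span S" and s: "s \<in> Z"
    by (auto simp: int_module.span_breakdown_eq)
  have "s - zsmul i b \<in> Z" using i assms(2) by blast
  from int_module.subspace_diff[OF Z s this] have "zsmul i b \<in> Z" by simp
  then have "i = 0" using no_multiple by blast
  then show "s \<in> int_module.span S" using i by simp
qed

lemma zsmul_odd_mem:
  assumes L: "int_module.subspace L" and "d - (e + e) \<in> L" and "e - zsmul l d \<in> L"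
  shows "zsmul (1 - (l + l)) d \<in> L"
proof -
  have "zsmul (1 - (l + l)) d = (d - (e + e)) + (e - zsmul l d) + (e - zsmul l d)"
    by (simp only: int_module.scale_left_diff_distrib int_module.scale_left_distrib
        int_module.scale_one) (simp add: algebra_simps)
  also have "\<dots> \<in> L" using assms by (intro int_module.subspace_add[OF L])
  finally show ?thesis .
qed

definition center_mod :: "('a::ab_group_add \<Rightarrow> 'a \<Rightarrow> 'a) \<Rightarrow> 'a set \<Rightarrow> 'a set" where
  "center_mod m L = {a. \<forall>x. star m a x \<in> L \<and> star m x a \<in> L}"

lemma zeta_Suc_center_mod: "zeta m (Suc n) = center_mod m (zeta m n)"
  by (simp add: center_mod_def)

lemma subbrace_UNIV: "subbrace m UNIV"
  by (simp add: subbrace_def)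

lemma ideal_of_subspace: "ideal_of m L J \<Longrightarrow> int_module.subspace L"
  by (rule int_module_subspaceI) (auto simp: ideal_of_def subbrace_def)

lemma ideal_of_UNIV_star:
  assumes "ideal_of m L UNIV" and "l \<in> L"
  shows "star m x l \<in> L" and "star m l x \<in> L"
  using assms unfolding ideal_of_def by blast+

lemma ideal_subset_center_mod: "ideal_of m L UNIV \<Longrightarrow> L \<subseteq> center_mod m L"
  by (auto simp: center_mod_def intro: ideal_of_UNIV_star)

locale left_brace =
  fixes m :: "'a::ab_group_add \<Rightarrow> 'a \<Rightarrow> 'a"
  assumes brace: "brace m"
begin

lemma mult_assoc: "m (m a b) c = m a (m b c)"
  using brace unfolding brace_def mgroup_def by blast

lemma mult_add_right: "m a (b + c) = m a b + m a c - a"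
  using brace unfolding brace_def by blast

lemma mult_zero_right [simp]: "m a 0 = a"
  using mult_add_right[of a 0 0] by simp

lemma neutral_eq_zero: "\<forall>a. m e a = a \<and> m a e = a \<Longrightarrow> e = 0"
  by (metis mult_zero_right)

lemma mult_zero_left [simp]: "m 0 a = a"
  and inverse_exists: "\<exists>b. m a b = 0 \<and> m b a = 0"
proof -
  obtain e where e: "\<forall>a. m e a = a \<and> m a e = a" "\<forall>a. \<exists>b. m a b = e \<and> m b a = e"
    using brace unfolding brace_def mgroup_def by blast
  moreover have "e = 0" using e(1) by (rule neutral_eq_zero)
  ultimately show "m 0 a = a" "\<exists>b. m a b = 0 \<and> m b a = 0" by simp_all
qed

lemma mone_eq_zero: "mone m = 0"
  unfolding mone_def by (rule the_equality) (simp, rule neutral_eq_zero)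

lemma mult_minv: "m a (minv m a) = 0" "m (minv m a) a = 0"
proof -
  obtain b where b: "m a b = 0" "m b a = 0" using inverse_exists by blast
  have "\<exists>!c. m a c = 0 \<and> m c a = 0"
  proof (rule ex1I[of _ b])
    fix c assume "m a c = 0 \<and> m c a = 0"
    then show "c = b" by (metis b(2) mult_assoc mult_zero_left mult_zero_right)
  qed (use b in simp)
  then have "m a (minv m a) = 0 \<and> m (minv m a) a = 0"
    unfolding minv_def mone_eq_zero by (rule theI')
  then show "m a (minv m a) = 0" "m (minv m a) a = 0" by simp_all
qed

lemma mult_eq_star: "m a b = a + b + star m a b"
  unfolding star_def by simp

lemma additive_star: "additive (star m x)"
  by unfold_locales (simp add: star_def mult_add_right algebra_simps)

lemma star_add_right: "star m x (y + z) = star m x y + star m x z"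
  by (rule additive.add[OF additive_star])

lemma star_zero_left [simp]: "star m 0 x = 0"
  by (simp add: star_def)

lemma star_zero_right [simp]: "star m x 0 = 0"
  by (simp add: star_def)

lemma star_zsmul_right: "star m x (zsmul i y) = zsmul i (star m x y)"
  by (rule additive_zsmul[OF additive_star])

lemma star_mult_left: "star m (m a b) x = star m a (star m b x) + star m a x + star m b x"
proof -
  have "star m a (star m b x) = star m a (m b x) - star m a b - star m a x"
    unfolding star_def[of m b x] by (simp add: additive.diff[OF additive_star])
  then show ?thesis unfolding star_def mult_assoc by (simp add: algebra_simps)
qed

lemma mult_minv_star: "m a (v + star m (minv m a) v) = a + v"
proof -
  have "star m (m a (minv m a)) v = 0" by (simp add: mult_minv)
  then have "star m a (star m (minv m a) v) = - star m a v - star m (minv m a) v"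
    unfolding star_mult_left by (simp add: algebra_simps eq_neg_iff_add_eq_0)
  then show ?thesis unfolding mult_eq_star[of a] star_add_right by (simp add: algebra_simps)
qed

lemma ideal_ofI:
  assumes J: "subbrace m J" and L: "int_module.subspace L" and LJ: "L \<subseteq> J"
    and star: "\<And>t l. t \<in> J \<Longrightarrow> l \<in> L \<Longrightarrow> star m t l \<in> L \<and> star m l t \<in> L"
  shows "ideal_of m L J"
proof -
  have mult: "m a b \<in> L" if a: "a \<in> L" and b: "b \<in> L" for a b
  proof -
    have "star m a b \<in> L" using star a b LJ by blast
    then show ?thesis unfolding mult_eq_star[of a]
      using a b by (intro int_module.subspace_add[OF L])
  qed
  have minv: "minv m a \<in> L" if a: "a \<in> L" for a
  proof -
    have "minv m a \<in> J" using J a LJ unfolding subbrace_def by blast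
    then have "star m (minv m a) a \<in> L" using star a by blast
    then have "- (a + star m (minv m a) a) \<in> L"
      using a by (intro int_module.subspace_neg[OF L] int_module.subspace_add[OF L])
    moreover have "minv m a = - (a + star m (minv m a) a)"
      using mult_minv(2)[of a] unfolding mult_eq_star[of "minv m a" a] add.assoc
      by (rule eq_neg_iff_add_eq_0[THEN iffD2])
    ultimately show ?thesis by simp
  qed
  have "subbrace m L"
    unfolding subbrace_def mone_eq_zero
    using mult minv L
    by (simp add: int_module.subspace_0 int_module.subspace_add int_module.subspace_neg)
  then show ?thesis unfolding ideal_of_def using J LJ star by blast
qed

lemma star_left_add_ideal:
  assumes L: "ideal_of m L UNIV" and l: "l \<in> L"
  shows "star m (y + l) x - star m y x \<in> L"
proof -
  let ?l = "l + star m (minv m y) l"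
  have l': "?l \<in> L"
    using l ideal_of_UNIV_star[OF L l] by (intro int_module.subspace_add[OF ideal_of_subspace[OF L]])
  have "star m (y + l) x = star m (m y ?l) x" by (simp only: mult_minv_star)
  also have "\<dots> = star m y (star m ?l x) + star m y x + star m ?l x" by (rule star_mult_left)
  finally have "star m (y + l) x = \<dots>" .
  moreover have "star m y (star m ?l x) + star m ?l x \<in> L"
    using ideal_of_UNIV_star[OF L] l' ideal_of_subspace[OF L] by (meson int_module.subspace_add)
  ultimately show ?thesis by (simp add: algebra_simps)
qed

lemma star_left_add_center_mod:
  assumes L: "ideal_of m L UNIV" and a: "a \<in> center_mod m L"
  shows "star m (a + y) x - star m y x \<in> L"
proof -
  have S: "int_module.subspace L" using L by (rule ideal_of_subspace)
  let ?b = "y + star m (minv m a) y"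
  have e: "m a ?b = a + y" by (rule mult_minv_star)
  then have "y = ?b + star m a ?b" unfolding mult_eq_star[of a] by (simp add: algebra_simps)
  moreover have "star m a ?b \<in> L" using a by (simp add: center_mod_def)
  ultimately have "star m y x - star m ?b x \<in> L" by (metis star_left_add_ideal[OF L])
  moreover have "star m a (star m ?b x) + star m a x \<in> L"
    using a S by (simp add: center_mod_def int_module.subspace_add)
  ultimately have "star m a (star m ?b x) + star m a x - (star m y x - star m ?b x) \<in> L"
    using int_module.subspace_diff[OF S] by blast
  moreover have "star m (a + y) x = star m a (star m ?b x) + star m a x + star m ?b x"
    unfolding e[symmetric] star_mult_left ..
  ultimately show ?thesis by (simp add: algebra_simps)
qed

lemma ideal_center_mod:
  assumes L: "ideal_of m L UNIV"
  shows "ideal_of m (center_mod m L) UNIV"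
proof (rule ideal_ofI[OF subbrace_UNIV _ subset_UNIV])
  have S: "int_module.subspace L" using L by (rule ideal_of_subspace)
  show "int_module.subspace (center_mod m L)"
  proof (rule int_module_subspaceI)
    show "0 \<in> center_mod m L" using int_module.subspace_0[OF S] by (simp add: center_mod_def)
  next
    fix a b assume a: "a \<in> center_mod m L" and b: "b \<in> center_mod m L"
    have "star m (a + b) x \<in> L" for x
    proof -
      have "star m b x \<in> L" using b by (simp add: center_mod_def)
      from int_module.subspace_add[OF S star_left_add_center_mod[OF L a, of b x] this]
      show ?thesis by simp
    qed
    moreover have "star m x (a + b) \<in> L" for x
      using a b S by (simp add: center_mod_def star_add_right int_module.subspace_add)
    ultimately show "a + b \<in> center_mod m L" by (simp add: center_mod_def)
  next
    fix a assume a: "a \<in> center_mod m L"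
    have "star m (- a) x \<in> L" for x
      using int_module.subspace_neg[OF S star_left_add_center_mod[OF L a, of "- a" x]] by simp
    moreover have "star m x (- a) \<in> L" for x
      using a S by (simp add: center_mod_def additive.minus[OF additive_star] int_module.subspace_neg)
    ultimately show "- a \<in> center_mod m L" by (simp add: center_mod_def)
  qed
  show "star m t l \<in> center_mod m L \<and> star m l t \<in> center_mod m L"
    if "l \<in> center_mod m L" for t l
    using that ideal_subset_center_mod[OF L] by (auto simp: center_mod_def)
qed

lemma star_left_add_center_mod2:
  assumes L: "ideal_of m L UNIV"
    and u: "u \<in> center_mod m (center_mod m L)" and v: "v \<in> center_mod m (center_mod m L)"
  shows "star m (u + v) x - (star m u x + star m v x) \<in> L"
proof -
  have S: "int_module.subspace L" using L by (rule ideal_of_subspace)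
  have S1: "int_module.subspace (center_mod m L)"
    using ideal_center_mod[OF L] by (rule ideal_of_subspace)
  let ?b = "v + star m (minv m u) v"
  have e: "m u ?b = u + v" by (rule mult_minv_star)
  then have "v = star m u ?b + ?b" unfolding mult_eq_star[of u] by (simp add: algebra_simps)
  moreover have "star m u ?b \<in> center_mod m L" using u by (simp add: center_mod_def)
  ultimately have d: "star m v x - star m ?b x \<in> L" by (metis star_left_add_center_mod[OF L])
  have "star m v x \<in> center_mod m L"
    using v unfolding center_mod_def[of m "center_mod m L"] by blast
  moreover have "star m v x - star m ?b x \<in> center_mod m L" using d ideal_subset_center_mod[OF L] by blast
  ultimately have "star m v x - (star m v x - star m ?b x) \<in> center_mod m L"
    by (rule int_module.subspace_diff[OF S1])
  then have "star m u (star m ?b x) \<in> L" using u by (simp add: center_mod_def)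
  from int_module.subspace_diff[OF S this d]
  have "star m u (star m ?b x) - (star m v x - star m ?b x) \<in> L" .
  moreover have "star m (u + v) x = star m u (star m ?b x) + star m u x + star m ?b x"
    unfolding e[symmetric] star_mult_left ..
  ultimately show ?thesis by (simp add: algebra_simps)
qed

lemma star_left_zsmul_center_mod2:
  assumes L: "ideal_of m L UNIV" and u: "u \<in> center_mod m (center_mod m L)"
  shows "star m (zsmul i u) x - zsmul i (star m u x) \<in> L"
proof (rule quasi_additive_zsmul[OF ideal_of_subspace[OF L] _ _ u])
  show "int_module.subspace (center_mod m (center_mod m L))"
    using L by (intro ideal_of_subspace[of m _ UNIV] ideal_center_mod)
qed (rule star_left_add_center_mod2[OF L])

lemma ideal_of_between:
  assumes J: "int_module.subspace J" and "Z \<subseteq> J" and "J \<subseteq> center_mod m Z"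
  shows "ideal_of m J UNIV"
proof (rule ideal_ofI[OF subbrace_UNIV J subset_UNIV])
  fix t l assume "l \<in> J"
  then have "l \<in> center_mod m Z" using assms(3) by blast
  then show "star m t l \<in> J \<and> star m l t \<in> J" using assms(2) by (auto simp: center_mod_def)
qed

lemma ideal_span_insert_center_mod:
  assumes L: "ideal_of m L UNIV" and b: "b \<in> center_mod m (center_mod m L)"
  shows "ideal_of m (int_module.span (insert b (center_mod m L))) UNIV"
proof (rule ideal_of_between)
  have Z1: "ideal_of m (center_mod m L) UNIV" using L by (rule ideal_center_mod)
  show "center_mod m L \<subseteq> int_module.span (insert b (center_mod m L))"
    by (auto intro: int_module.span_base)
  show "int_module.span (insert b (center_mod m L)) \<subseteq> center_mod m (center_mod m L)"
    using b ideal_subset_center_mod[OF Z1] ideal_of_subspace[OF ideal_center_mod[OF Z1]]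
    by (intro int_module.span_minimal) auto
qed simp

lemma star_span_insert_generator:
  assumes L: "ideal_of m L UNIV" and b: "b \<in> center_mod m (center_mod m L)"
    and t: "t \<in> int_module.span (insert b (center_mod m L))"
  shows "star m t b \<in> int_module.span (insert b (insert (star m b b) L))" (is "_ \<in> ?I")
proof -
  have S: "int_module.subspace L" using L by (rule ideal_of_subspace)
  have S1: "int_module.subspace (center_mod m L)"
    using ideal_center_mod[OF L] by (rule ideal_of_subspace)
  obtain n where n: "t - zsmul n b \<in> center_mod m L"
    using t unfolding int_module.span_breakdown_eq int_module.span_eq_iff[THEN iffD2, OF S1] by blast
  have "star m (t - zsmul n b + zsmul n b) b - star m (zsmul n b) b \<in> L"
    using star_left_add_center_mod[OF L n] .
  moreover have "star m (zsmul n b) b - zsmul n (star m b b) \<in> L"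
    using star_left_zsmul_center_mod2[OF L b] .
  ultimately have "star m t b - zsmul n (star m b b) \<in> L"
    using int_module.subspace_add[OF S] by fastforce
  then have "star m t b - zsmul n (star m b b) \<in> ?I"
    by (simp add: int_module.span_base)
  moreover have "zsmul n (star m b b) \<in> ?I"
    by (intro int_module.span_scale int_module.span_base) simp
  ultimately have "star m t b - zsmul n (star m b b) + zsmul n (star m b b) \<in> ?I"
    by (rule int_module.span_add)
  then show ?thesis by simp
qed

lemma span_insert_ideal_of_span_insert:
  assumes L: "ideal_of m L UNIV" and b: "b \<in> center_mod m (center_mod m L)"
  shows "ideal_of m (int_module.span (insert b (insert (star m b b) L)))
    (int_module.span (insert b (center_mod m L)))" (is "ideal_of m ?I ?J")
proof -
  have d: "star m b b \<in> center_mod m L"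
    using b unfolding center_mod_def[of m "center_mod m L"] by blast
  have star_Z1: "star m t z \<in> L" "star m z t \<in> L" if "z \<in> center_mod m L" for t z
    using that by (simp_all add: center_mod_def)
  have J: "ideal_of m ?J UNIV" using L b by (rule ideal_span_insert_center_mod)
  have IJ: "?I \<subseteq> ?J"
    using d ideal_subset_center_mod[OF L]
    by (intro int_module.span_minimal) (auto intro: int_module.span_base)
  show ?thesis
  proof (rule ideal_ofI[OF _ int_module.subspace_span IJ])
    show "subbrace m ?J" using J by (simp add: ideal_of_def)
    fix t s assume t: "t \<in> ?J" and s: "s \<in> ?I"
    have "star m t ` insert b (insert (star m b b) L) \<subseteq> ?I"
      using star_span_insert_generator[OF L b t] star_Z1(1)[OF d] ideal_of_UNIV_star(1)[OF L]
      by (auto intro: int_module.span_base)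
    then have "star m t s \<in> ?I"
      using additive_image_span_subset[OF additive_star int_module.subspace_span] s by blast
    moreover have "star m s ` insert b (center_mod m L) \<subseteq> ?I"
      using star_span_insert_generator[OF L b] IJ s star_Z1(1) by (auto intro: int_module.span_base)
    then have "star m s t \<in> ?I"
      using additive_image_span_subset[OF additive_star int_module.subspace_span] t by blast
    ultimately show "star m t s \<in> ?I \<and> star m s t \<in> ?I" by blast
  qed
qed

lemma zsmul_mem_center_mod:
  assumes L: "ideal_of m L UNIV" and b: "b \<in> center_mod m (center_mod m L)"
    and I: "ideal_of m I UNIV" and "b \<in> I"
    and kill: "\<And>s. s \<in> I \<Longrightarrow> s \<in> center_mod m L \<Longrightarrow> zsmul t s \<in> L"
  shows "zsmul t b \<in> center_mod m L"
proof -
  have star_b: "star m x b \<in> I \<inter> center_mod m L" "star m b x \<in> I \<inter> center_mod m L" for x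
    using b ideal_of_UNIV_star[OF I \<open>b \<in> I\<close>]
    unfolding center_mod_def[of m "center_mod m L"] by blast+
  then have kill_b: "zsmul t (star m x b) \<in> L" "zsmul t (star m b x) \<in> L" for x
    using kill by blast+
  have "star m (zsmul t b) x \<in> L" for x
    using int_module.subspace_add[OF ideal_of_subspace[OF L]
        star_left_zsmul_center_mod2[OF L b, of t x] kill_b(2)[of x]] by simp
  moreover have "star m x (zsmul t b) \<in> L" for x
    using kill_b(1) by (simp add: star_zsmul_right)
  ultimately show ?thesis by (simp add: center_mod_def)
qed

lemma tbrace_ideal_span_insert:
  assumes "tbrace m" and L: "ideal_of m L UNIV" and b: "b \<in> center_mod m (center_mod m L)"
  shows "ideal_of m (int_module.span (insert b (insert (star m b b) L))) UNIV"
  using assms ideal_span_insert_center_mod[OF L b] span_insert_ideal_of_span_insert[OF L b]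
  unfolding tbrace_def by blast

lemma tbrace_zsmul_mem_center_mod:
  assumes T: "tbrace m" and L: "ideal_of m L UNIV" and a: "a \<in> center_mod m (center_mod m L)"
  shows "\<exists>i. i \<noteq> 0 \<and> zsmul i a \<in> center_mod m L"
proof (rule ccontr)
  assume no_multiple_a: "\<nexists>i. i \<noteq> 0 \<and> zsmul i a \<in> center_mod m L"
  define b where "b = a + a"
  define d where "d = star m b b"
  define I where "I = int_module.span (insert b (insert d L))"
  have S: "int_module.subspace L" using L by (rule ideal_of_subspace)
  have S1: "int_module.subspace (center_mod m L)"
    using ideal_center_mod[OF L] by (rule ideal_of_subspace)
  have b: "b \<in> center_mod m (center_mod m L)"
    using int_module.subspace_add[OF ideal_of_subspace[OF ideal_center_mod[OF ideal_center_mod[OF L]]] a a]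
    unfolding b_def .
  then have star_b: "star m x b \<in> center_mod m L" "star m b x \<in> center_mod m L" for x
    unfolding center_mod_def[of m "center_mod m L"] by blast+
  have no_multiple: "zsmul i b \<notin> center_mod m L" if "i \<noteq> 0" for i
  proof
    assume "zsmul i b \<in> center_mod m L"
    then have "zsmul (i + i) a \<in> center_mod m L"
      by (simp only: b_def int_module.scale_right_distrib int_module.scale_left_distrib)
    moreover have "i + i \<noteq> 0" using that by simp
    ultimately show False using no_multiple_a by blast
  qed
  have I: "ideal_of m I UNIV" unfolding I_def d_def using T L b by (rule tbrace_ideal_span_insert)
  have "int_module.span (insert d L) \<subseteq> center_mod m L"
    using star_b ideal_subset_center_mod[OF L] S1 unfolding d_def
    by (intro int_module.span_minimal) auto
  then have I_Z1: "I \<inter> center_mod m L \<subseteq> int_module.span (insert d L)"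
    unfolding I_def by (rule span_insert_Int_subset[OF S1 _ no_multiple])
  have "b \<in> I" unfolding I_def by (simp add: int_module.span_base)
  then have "star m a b \<in> I \<inter> center_mod m L" using ideal_of_UNIV_star(1)[OF I] star_b by blast
  then have "star m a b \<in> int_module.span (insert d L)" using I_Z1 by blast
  then obtain l where l: "star m a b - zsmul l d \<in> L"
    unfolding int_module.span_breakdown_eq int_module.span_eq_iff[THEN iffD2, OF S] by blast
  have "d - (star m a b + star m a b) \<in> L"
    using star_left_add_center_mod2[OF L a a] unfolding d_def b_def .
  from zsmul_odd_mem[OF S this l] have "zsmul (1 - (l + l)) d \<in> L" .
  then have "zsmul (1 - (l + l)) ` insert d L \<subseteq> L"
    using int_module.subspace_scale[OF S] by blast
  then have "zsmul (1 - (l + l)) ` int_module.span (insert d L) \<subseteq> L"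
    by (rule additive_image_span_subset[OF additive_zsmul_right S])
  with I_Z1 have "zsmul (1 - (l + l)) b \<in> center_mod m L"
    by (intro zsmul_mem_center_mod[OF L b I \<open>b \<in> I\<close>]) blast
  moreover have "1 - (l + l) \<noteq> 0" by presburger
  ultimately show False using no_multiple by blast
qed

lemma ideal_zeta: "ideal_of m (zeta m n) UNIV"
proof (induction n)
  case 0
  show ?case by (rule ideal_ofI[OF subbrace_UNIV]) simp_all
next
  case (Suc n)
  then show ?case unfolding zeta_Suc_center_mod by (rule ideal_center_mod)
qed

lemma tbrace_zeta_Suc_zsmul_mem:
  assumes T: "tbrace m" and a: "a \<in> zeta m (Suc n)"
  shows "\<exists>i. i \<noteq> 0 \<and> zsmul i a \<in> zeta m 1"
  using a
proof (induction n arbitrary: a)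
  case 0
  then show ?case by (intro exI[of _ 1]) simp
next
  case (Suc n)
  then obtain i where i: "i \<noteq> 0" "zsmul i a \<in> zeta m (Suc n)"
    using tbrace_zsmul_mem_center_mod[OF T ideal_zeta] by (metis zeta_Suc_center_mod)
  then obtain j where "j \<noteq> 0" "zsmul j (zsmul i a) \<in> zeta m 1" using Suc.IH by blast
  with i show ?case by (intro exI[of _ "j * i"]) simp
qed

end

theorem proposition4p2:
  fixes m :: "'a::ab_group_add \<Rightarrow> 'a \<Rightarrow> 'a"
  assumes "brace m" and "tbrace m"
  shows "\<forall>n. \<forall>a \<in> zeta m n. \<exists>k::nat. k > 0 \<and> (\<Sum>i<k. a) \<in> zeta m 1"
proof (intro allI ballI)
  interpret left_brace m using assms(1) by unfold_locales
  fix n a assume "a \<in> zeta m n"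
  then have "a \<in> zeta m (Suc n)"
    using ideal_subset_center_mod[OF ideal_zeta, of n] unfolding zeta_Suc_center_mod by blast
  then obtain i where "i \<noteq> 0" "zsmul i a \<in> zeta m 1"
    using tbrace_zeta_Suc_zsmul_mem[OF assms(2)] by blast
  then have "(\<Sum>_<nat \<bar>i\<bar>. a) \<in> zeta m 1"
    using zsmul_abs_mem[OF ideal_of_subspace[OF ideal_zeta] \<open>zsmul i a \<in> zeta m 1\<close>]
    unfolding zsmul_of_nat[symmetric] by (simp del: zeta.simps)
  moreover have "nat \<bar>i\<bar> > 0" using \<open>i \<noteq> 0\<close> by simp
  ultimately show "\<exists>k::nat. k > 0 \<and> (\<Sum>i<k. a) \<in> zeta m 1" by blast
qed

end
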